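(* Let $J$ be a $3\times 3$ Jacobi matrix that realizes perfect state transfer, and let $T_0>0$ be the earliest time at which perfect state transfer occurs. Then $J$ does not have Early State Exclusion; that is, there is no $t$ with $0<t<T_0$ such that $(e^{-iJt}\mathbf{e}_0,\mathbf{e}_0)_{\mathbb{C}^{3}}=0$.
   Context: A Jacobi matrix of order $N+1$ is a real symmetric tridiagonal $(N+1)\times(N+1)$ matrix $J$ with diagonal entries $a_0,\dots,a_N\in\mathbb{R}$ and off-diagonal entries $b_0,\dots,b_{N-1}>0$. Let $\mathbf{e}_0,\dots,\mathbf{e}_N$ be the standard basis of $\mathbb{C}^{N+1}$. $J$ realizes perfect state transfer (PST) at time $T>0$ if $e^{-iTJ}\mathbf{e}_0=e^{i\phi}\mathbf{e}_N$ for some $\phi\in\mathbb{R}$. If $T_0$ is the earliest (smallest positive) such time, $J$ is said to have Early State Exclusion (ESE) at time $t$ if $0<t<T_0$ and $(e^{-iJt}\mathbf{e}_0,\mathbf{e}_0)_{\mathbb{C}^{N+1}}=0$. *)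

theory Defs
  imports "HOL-Analysis.Analysis"
begin

definition jacobi3 :: "real \<Rightarrow> real \<Rightarrow> real \<Rightarrow> real \<Rightarrow> real \<Rightarrow> complex^3^3" where
  "jacobi3 a0 a1 a2 b0 b1 = (\<chi> i j.
     if i = 0 \<and> j = 0 then complex_of_real a0
     else if i = 1 \<and> j = 1 then complex_of_real a1
     else if i = 2 \<and> j = 2 then complex_of_real a2
     else if (i = 0 \<and> j = 1) \<or> (i = 1 \<and> j = 0) then complex_of_real b0
     else if (i = 1 \<and> j = 2) \<or> (i = 2 \<and> j = 1) then complex_of_real b1
     else 0)"

primrec mpow :: "complex^'n^'n \<Rightarrow> nat \<Rightarrow> complex^'n^'n" where
  "mpow A 0 = mat 1"
| "mpow A (Suc k) = A ** mpow A k"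

definition mexp :: "complex^'n^'n \<Rightarrow> complex^'n^'n" where
  "mexp A = (\<chi> i j. (\<Sum>k. (mpow A k) $ i $ j / of_nat (fact k)))"

definition mscale :: "complex \<Rightarrow> complex^'n^'n \<Rightarrow> complex^'n^'n" where
  "mscale c A = (\<chi> i j. c * A $ i $ j)"

definition evol :: "complex^'n^'n \<Rightarrow> real \<Rightarrow> complex^'n^'n" where
  "evol J t = mexp (mscale (- \<i> * complex_of_real t) J)"

definition cinner :: "complex^'n \<Rightarrow> complex^'n \<Rightarrow> complex" where
  "cinner x y = (\<Sum>i\<in>UNIV. x $ i * cnj (y $ i))"

definition e0 :: "complex^3" where "e0 = axis 0 1"
definition eN :: "complex^3" where "eN = axis 2 1"

definition PST :: "complex^3^3 \<Rightarrow> real \<Rightarrow> bool" where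
  "PST J T \<longleftrightarrow> T > 0 \<and> (\<exists>\<phi>::real. evol J T *v e0 = exp (\<i> * complex_of_real \<phi>) *s eN)"

end

theory Submission
  imports Defs
begin

(* The evolution U(t) = e^{-itJ} is unitary and commutes with J. If U(T) e0 = c e2, then the
   first column of J U(T) = U(T) J gives b0 U(T) e1 = c (b1 e1 + (a2 - a0) e2); as U(T) e1 is a
   unit vector orthogonal to U(T) e0 = c e2, this forces a0 = a2 and b0 = b1. So J commutes with
   the flip R e_i = e_(2-i), hence so does every U(t), i.e. U(t) is centrosymmetric. If U(t)_00 = 0,
   orthogonality of the columns 0 and 2 of U(t) then reads |U(t)_10|^2 = 0, so U(t) e0 is a
   unimodular multiple of e2: perfect state transfer already happens at t. *)

definition hermitian :: "complex^'n^'n \<Rightarrow> bool" where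
  "hermitian A \<longleftrightarrow> (\<forall>i j. cnj (A $ i $ j) = A $ j $ i)"

lemma mscale_mult_mscale: "mscale c A ** mscale d B = mscale (c * d) (A ** B)"
  by (simp add: mscale_def matrix_matrix_mult_def vec_eq_iff sum_distrib_left mult_ac)

lemma mpow_add: "mpow A (k + m) = mpow A k ** mpow A m"
  by (induct k) (simp_all add: matrix_mul_assoc matrix_mul_lid)

lemma mpow_mscale: "mpow (mscale c A) k = mscale (c ^ k) (mpow A k)"
proof (induct k)
  case 0
  then show ?case by (simp add: mscale_def mat_def vec_eq_iff)
next
  case (Suc k)
  then show ?case by (simp add: mscale_mult_mscale)
qed

lemma mpow_commute: "M ** A = A ** M \<Longrightarrow> M ** mpow A k = mpow A k ** M"
proof (induct k)
  case 0
  then show ?case by (simp add: matrix_mul_lid matrix_mul_rid)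
next
  case (Suc k)
  have "M ** mpow A (Suc k) = (M ** A) ** mpow A k" by (simp add: matrix_mul_assoc)
  also have "\<dots> = A ** (M ** mpow A k)" by (metis Suc.prems matrix_mul_assoc)
  also have "\<dots> = A ** (mpow A k ** M)" using Suc by simp
  also have "\<dots> = mpow A (Suc k) ** M" by (simp add: matrix_mul_assoc)
  finally show ?case .
qed

definition entry_norm_sum :: "complex^'n^'n \<Rightarrow> real" where
  "entry_norm_sum A = (\<Sum>i\<in>UNIV. \<Sum>j\<in>UNIV. norm (A $ i $ j))"

lemma row_norm_sum_le_entry_norm_sum: "(\<Sum>j\<in>UNIV. norm (A $ i $ j)) \<le> entry_norm_sum A"
  unfolding entry_norm_sum_def
  by (rule member_le_sum[where f = "\<lambda>i. \<Sum>j\<in>UNIV. norm (A $ i $ j)"]) (auto intro: sum_nonneg)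

lemma norm_mpow_entry_le: "norm (mpow A k $ i $ j) \<le> entry_norm_sum A ^ k"
proof (induct k arbitrary: i j)
  case 0
  then show ?case by (simp add: mat_def)
next
  case (Suc k)
  have "norm (mpow A (Suc k) $ i $ j) = norm (\<Sum>l\<in>UNIV. A $ i $ l * mpow A k $ l $ j)"
    by (simp add: matrix_matrix_mult_def)
  also have "\<dots> \<le> (\<Sum>l\<in>UNIV. norm (A $ i $ l)) * entry_norm_sum A ^ k"
    unfolding sum_distrib_right
    by (rule order_trans[OF norm_sum sum_mono]) (simp add: norm_mult mult_left_mono Suc)
  also have "\<dots> \<le> entry_norm_sum A * entry_norm_sum A ^ k"
    by (rule mult_right_mono[OF row_norm_sum_le_entry_norm_sum])
      (simp add: entry_norm_sum_def sum_nonneg)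
  finally show ?case by simp
qed

definition mexp_term :: "complex \<Rightarrow> complex^'n^'n \<Rightarrow> 'n \<Rightarrow> 'n \<Rightarrow> nat \<Rightarrow> complex" where
  "mexp_term c A i j k = c ^ k * (mpow A k $ i $ j / of_nat (fact k))"

lemma mexp_mscale_entry: "mexp (mscale c A) $ i $ j = (\<Sum>k. mexp_term c A i j k)"
  unfolding mexp_def mpow_mscale by (simp add: mexp_term_def mscale_def)

lemma summable_norm_mexp_term: "summable (\<lambda>k. norm (mexp_term c A i j k))"
proof (rule summable_comparison_test[OF _ summable_exp_generic[of "norm c * entry_norm_sum A"]])
  show "\<exists>N. \<forall>k\<ge>N. norm (norm (mexp_term c A i j k)) \<le> (norm c * entry_norm_sum A) ^ k /\<^sub>R fact k"
  proof (intro exI allI impI)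
    fix k
    have "norm (mexp_term c A i j k) = norm c ^ k * norm (mpow A k $ i $ j) / fact k"
      by (simp add: mexp_term_def norm_mult norm_divide norm_power)
    also have "\<dots> \<le> norm c ^ k * entry_norm_sum A ^ k / fact k"
      by (intro divide_right_mono mult_left_mono norm_mpow_entry_le) auto
    finally show "norm (norm (mexp_term c A i j k)) \<le> (norm c * entry_norm_sum A) ^ k /\<^sub>R fact k"
      by (simp add: power_mult_distrib divide_inverse_commute)
  qed
qed

lemma summable_mexp_term: "summable (\<lambda>k. mexp_term c A i j k)"
  using summable_norm_mexp_term summable_norm_cancel by blast

lemma binomial_fact_sum:
  "(\<Sum>k\<le>n. x ^ k * y ^ (n - k) / (of_nat (fact k) * of_nat (fact (n - k))))
     = (x + y) ^ n / (of_nat (fact n) :: 'a::field_char_0)"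
proof -
  have "(x + y) ^ n / of_nat (fact n)
      = (\<Sum>k\<le>n. of_nat (n choose k) * x ^ k * y ^ (n - k) / (of_nat (fact n) :: 'a))"
    by (simp add: binomial_ring sum_divide_distrib)
  also have "\<dots> = (\<Sum>k\<le>n. x ^ k * y ^ (n - k) / (of_nat (fact k) * of_nat (fact (n - k))))"
  proof (rule sum.cong[OF refl])
    fix k
    assume "k \<in> {..n}"
    then have "of_nat (fact k) * of_nat (fact (n - k)) * of_nat (n choose k) = (of_nat (fact n) :: 'a)"
      by (metis atMost_iff binomial_fact_lemma of_nat_mult)
    then show "of_nat (n choose k) * x ^ k * y ^ (n - k) / of_nat (fact n)
        = x ^ k * y ^ (n - k) / (of_nat (fact k) * of_nat (fact (n - k)))"
      by (auto simp: field_simps simp del: of_nat_fact)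
  qed
  finally show ?thesis by simp
qed

lemma mexp_term_Cauchy_product:
  "(\<Sum>l\<in>UNIV. \<Sum>k\<le>n. mexp_term c A i l k * mexp_term d A l j (n - k)) = mexp_term (c + d) A i j n"
proof -
  have "(\<Sum>l\<in>UNIV. \<Sum>k\<le>n. mexp_term c A i l k * mexp_term d A l j (n - k))
      = (\<Sum>k\<le>n. \<Sum>l\<in>UNIV. mexp_term c A i l k * mexp_term d A l j (n - k))"
    by (rule sum.swap)
  also have "\<dots> = (\<Sum>k\<le>n. c ^ k * d ^ (n - k) / (of_nat (fact k) * of_nat (fact (n - k)))
                            * (mpow A k ** mpow A (n - k)) $ i $ j)"
    by (simp add: mexp_term_def matrix_matrix_mult_def sum_distrib_left mult_ac)
  also have "\<dots> = (\<Sum>k\<le>n. c ^ k * d ^ (n - k) / (of_nat (fact k) * of_nat (fact (n - k)))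
                            * mpow A n $ i $ j)"
    by (intro sum.cong refl) (simp flip: mpow_add)
  also have "\<dots> = (c + d) ^ n / of_nat (fact n) * mpow A n $ i $ j"
    by (simp only: binomial_fact_sum flip: sum_distrib_right)
  finally show ?thesis by (simp add: mexp_term_def)
qed

lemma mexp_mscale_add: "mexp (mscale c A) ** mexp (mscale d A) = mexp (mscale (c + d) A)"
proof -
  have "(mexp (mscale c A) ** mexp (mscale d A)) $ i $ j = mexp (mscale (c + d) A) $ i $ j" for i j
  proof -
    have "(mexp (mscale c A) ** mexp (mscale d A)) $ i $ j
        = (\<Sum>l\<in>UNIV. (\<Sum>k. mexp_term c A i l k) * (\<Sum>k. mexp_term d A l j k))"
      by (simp add: matrix_matrix_mult_def mexp_mscale_entry)
    also have "\<dots> = (\<Sum>l\<in>UNIV. \<Sum>n. \<Sum>k\<le>n. mexp_term c A i l k * mexp_term d A l j (n - k))"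
      by (simp add: Cauchy_product summable_norm_mexp_term)
    also have "\<dots> = (\<Sum>n. \<Sum>l\<in>UNIV. \<Sum>k\<le>n. mexp_term c A i l k * mexp_term d A l j (n - k))"
      by (rule suminf_sum[symmetric]) (simp add: summable_Cauchy_product summable_norm_mexp_term)
    finally show ?thesis by (simp add: mexp_term_Cauchy_product mexp_mscale_entry)
  qed
  then show ?thesis by (simp add: vec_eq_iff)
qed

lemma mexp_mscale_zero: "mexp (mscale 0 A) = mat 1"
proof -
  have "(\<lambda>k. mexp_term 0 A i j k) = (\<lambda>k. if k = 0 then mat 1 $ i $ j else 0)" for i j
    by (auto simp: mexp_term_def)
  then have "(\<lambda>k. mexp_term 0 A i j k) sums mat 1 $ i $ j" for i j
    using sums_single[of 0 "\<lambda>_. mat 1 $ i $ j"] by simp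
  then show ?thesis by (simp add: vec_eq_iff mexp_mscale_entry sums_iff)
qed

lemma cnj_mpow_entry:
  assumes "hermitian A"
  shows "cnj (mpow A k $ i $ j) = mpow A k $ j $ i"
proof (induct k arbitrary: i j)
  case 0
  then show ?case by (simp add: mat_def)
next
  case (Suc k)
  have "cnj (mpow A (Suc k) $ i $ j) = (mpow A k ** A) $ j $ i"
    using assms by (simp add: hermitian_def matrix_matrix_mult_def Suc mult.commute)
  also have "\<dots> = mpow A (Suc k) $ j $ i"
    using mpow_commute[of A A k] by simp
  finally show ?case .
qed

lemma cnj_mexp_mscale_entry:
  assumes "hermitian A"
  shows "cnj (mexp (mscale c A) $ i $ j) = mexp (mscale (cnj c) A) $ j $ i"
proof -
  have "(\<lambda>k. cnj (mexp_term c A i j k)) sums cnj (mexp (mscale c A) $ i $ j)"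
    by (simp add: mexp_mscale_entry summable_sums summable_mexp_term sums_cnj)
  moreover have "(\<lambda>k. cnj (mexp_term c A i j k)) = (\<lambda>k. mexp_term (cnj c) A j i k)"
    by (simp add: mexp_term_def cnj_mpow_entry[OF assms])
  ultimately show ?thesis by (simp add: mexp_mscale_entry sums_iff)
qed

lemma mexp_mscale_commute:
  assumes "M ** A = A ** M"
  shows "M ** mexp (mscale c A) = mexp (mscale c A) ** M"
proof -
  have "(M ** mexp (mscale c A)) $ i $ j = (mexp (mscale c A) ** M) $ i $ j" for i j
  proof -
    have "(M ** mexp (mscale c A)) $ i $ j = (\<Sum>l\<in>UNIV. \<Sum>k. M $ i $ l * mexp_term c A l j k)"
      by (simp add: matrix_matrix_mult_def mexp_mscale_entry suminf_mult summable_mexp_term)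
    also have "\<dots> = (\<Sum>k. \<Sum>l\<in>UNIV. M $ i $ l * mexp_term c A l j k)"
      by (rule suminf_sum[symmetric]) (simp add: summable_mult summable_mexp_term)
    also have "\<dots> = (\<Sum>k. c ^ k * ((M ** mpow A k) $ i $ j / of_nat (fact k)))"
      by (simp add: mexp_term_def matrix_matrix_mult_def sum_distrib_left sum_divide_distrib mult_ac)
    also have "\<dots> = (\<Sum>k. c ^ k * ((mpow A k ** M) $ i $ j / of_nat (fact k)))"
      by (simp add: mpow_commute[OF assms])
    also have "\<dots> = (\<Sum>k. \<Sum>l\<in>UNIV. mexp_term c A i l k * M $ l $ j)"
      by (simp add: mexp_term_def matrix_matrix_mult_def sum_distrib_left sum_divide_distrib mult_ac)
    also have "\<dots> = (\<Sum>l\<in>UNIV. \<Sum>k. mexp_term c A i l k * M $ l $ j)"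
      by (rule suminf_sum) (simp add: summable_mult2 summable_mexp_term)
    also have "\<dots> = (mexp (mscale c A) ** M) $ i $ j"
      by (simp add: matrix_matrix_mult_def mexp_mscale_entry suminf_mult2 summable_mexp_term)
    finally show ?thesis .
  qed
  then show ?thesis by (simp add: vec_eq_iff)
qed

lemma evol_commute: "M ** A = A ** M \<Longrightarrow> M ** evol A t = evol A t ** M"
  unfolding evol_def by (rule mexp_mscale_commute)

lemma evol_columns_orthonormal:
  assumes "hermitian A"
  shows "(\<Sum>l\<in>UNIV. cnj (evol A t $ l $ i) * evol A t $ l $ j) = mat 1 $ i $ j"
proof -
  have "(\<Sum>l\<in>UNIV. cnj (evol A t $ l $ i) * evol A t $ l $ j)
      = (mexp (mscale (cnj (- \<i> * of_real t)) A) ** mexp (mscale (- \<i> * of_real t) A)) $ i $ j"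
    by (simp add: evol_def matrix_matrix_mult_def cnj_mexp_mscale_entry[OF assms])
  also have "\<dots> = mat 1 $ i $ j"
    by (simp add: mexp_mscale_add mexp_mscale_zero)
  finally show ?thesis .
qed

lemma exhaust_3': "(i::3) = 0 \<or> i = 1 \<or> i = 2"
proof -
  have "(3::3) = 0" by simp
  then show ?thesis using exhaust_3[of i] by metis
qed

lemma forall_3': "(\<forall>i::3. P i) \<longleftrightarrow> P 0 \<and> P 1 \<and> P 2"
  using exhaust_3' by metis

lemma sum_UNIV_3: "sum f (UNIV::3 set) = f 0 + f 1 + f 2"
proof -
  have "(3::3) = 0" by simp
  then have "f 3 = f 0" by (rule arg_cong)
  then show ?thesis using sum_3[of f] by (simp add: ac_simps)
qed

lemma jacobi3_entries:
  "jacobi3 a0 a1 a2 b0 b1 $ 0 $ 0 = a0" "jacobi3 a0 a1 a2 b0 b1 $ 0 $ 1 = b0"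
  "jacobi3 a0 a1 a2 b0 b1 $ 0 $ 2 = 0"  "jacobi3 a0 a1 a2 b0 b1 $ 1 $ 0 = b0"
  "jacobi3 a0 a1 a2 b0 b1 $ 1 $ 1 = a1" "jacobi3 a0 a1 a2 b0 b1 $ 1 $ 2 = b1"
  "jacobi3 a0 a1 a2 b0 b1 $ 2 $ 0 = 0"  "jacobi3 a0 a1 a2 b0 b1 $ 2 $ 1 = b1"
  "jacobi3 a0 a1 a2 b0 b1 $ 2 $ 2 = a2"
  by (simp_all add: jacobi3_def)

lemma hermitian_jacobi3: "hermitian (jacobi3 a0 a1 a2 b0 b1)"
  by (simp add: hermitian_def forall_3' jacobi3_entries)

lemma matrix_vector_mult_e0: "(M *v e0) $ i = M $ i $ 0"
  by (simp add: e0_def matrix_vector_mult_def axis_def sum_UNIV_3)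

lemma cinner_e0: "cinner x e0 = x $ 0"
  by (simp add: cinner_def e0_def axis_def sum_UNIV_3)

lemma PST_iff_first_column:
  "PST J T \<longleftrightarrow> 0 < T \<and> evol J T $ 0 $ 0 = 0 \<and> evol J T $ 1 $ 0 = 0 \<and> norm (evol J T $ 2 $ 0) = 1"
proof -
  have unimodular: "(\<exists>\<phi>::real. z = exp (\<i> * of_real \<phi>)) \<longleftrightarrow> norm z = 1" for z :: complex
    by (metis complex_norm_eq_1_exp_eq norm_exp_i_times)
  show ?thesis
    unfolding PST_def vec_eq_iff forall_3' matrix_vector_mult_e0
    by (auto simp: eN_def axis_def unimodular[symmetric])
qed

lemma norm_eq_1_if_cnj_mult_self: "cnj z * z = 1 \<Longrightarrow> norm z = 1"
proof -
  assume "cnj z * z = 1"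
  then have "complex_of_real ((norm z)\<^sup>2) = 1" by (simp only: complex_norm_square mult.commute)
  then have "(norm z)\<^sup>2 = 1" using of_real_eq_1_iff by blast
  then show ?thesis using norm_ge_zero[of z] by (auto simp: power2_eq_1_iff)
qed

lemma PST_jacobi3_symmetric:
  assumes "b0 > 0" and "b1 > 0" and "PST (jacobi3 a0 a1 a2 b0 b1) T"
  shows "a2 = a0" and "b1 = b0"
proof -
  define J where "J = jacobi3 a0 a1 a2 b0 b1"
  define U where "U = evol J T"
  have u00: "U $ 0 $ 0 = 0" and u10: "U $ 1 $ 0 = 0" and u20: "norm (U $ 2 $ 0) = 1"
    using assms(3) by (simp_all add: PST_iff_first_column U_def J_def)
  have orth: "cnj (U $ 0 $ i) * U $ 0 $ j + cnj (U $ 1 $ i) * U $ 1 $ j + cnj (U $ 2 $ i) * U $ 2 $ j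
      = mat 1 $ i $ j" for i j
    using evol_columns_orthonormal[OF hermitian_jacobi3, of a0 a1 a2 b0 b1 T i j]
    by (simp add: U_def J_def sum_UNIV_3)
  have "J ** U = U ** J"
    unfolding U_def by (rule evol_commute) (rule refl)
  then have first_column: "(J ** U) $ r $ 0 = (U ** J) $ r $ 0" for r
    by simp
  have f0: "U $ 0 $ 1 * b0 = 0" and f1: "U $ 1 $ 1 * b0 = b1 * U $ 2 $ 0"
    and f2: "U $ 2 $ 0 * a0 + U $ 2 $ 1 * b0 = a2 * U $ 2 $ 0"
    using first_column[of 0] first_column[of 1] first_column[of 2] u00 u10
    by (simp_all add: matrix_matrix_mult_def sum_UNIV_3 J_def jacobi3_entries)
  have "cnj (U $ 2 $ 0) * U $ 2 $ 1 = 0"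
    using orth[of 0 1] u00 u10 by (simp add: mat_def)
  then have u21: "U $ 2 $ 1 = 0" using u20 by auto
  from f2 u21 have "U $ 2 $ 0 * (a0 - a2) = 0" by (simp add: algebra_simps)
  then show "a2 = a0" using u20 by auto
  have "U $ 0 $ 1 = 0" using f0 assms(1) by simp
  then have "cnj (U $ 1 $ 1) * U $ 1 $ 1 = 1"
    using orth[of 1 1] u21 by (simp add: mat_def)
  then have "norm (U $ 1 $ 1) = 1" by (rule norm_eq_1_if_cnj_mult_self)
  moreover have "norm (U $ 1 $ 1 * b0) = norm (b1 * U $ 2 $ 0)" using f1 by simp
  ultimately show "b1 = b0" using u20 assms(1,2) by (simp add: norm_mult)
qed

definition exchange3 :: "complex^3^3" where
  "exchange3 = (\<chi> i j. if i + j = 2 then 1 else 0)"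

lemma exchange3_entries:
  "exchange3 $ 0 $ 0 = 0" "exchange3 $ 0 $ 1 = 0" "exchange3 $ 0 $ 2 = 1"
  "exchange3 $ 1 $ 0 = 0" "exchange3 $ 1 $ 1 = 1" "exchange3 $ 1 $ 2 = 0"
  "exchange3 $ 2 $ 0 = 1" "exchange3 $ 2 $ 1 = 0" "exchange3 $ 2 $ 2 = 0"
  by (simp_all add: exchange3_def)

lemma exchange3_commute_jacobi3:
  "exchange3 ** jacobi3 a0 a1 a0 b0 b0 = jacobi3 a0 a1 a0 b0 b0 ** exchange3"
  by (simp add: vec_eq_iff forall_3' matrix_matrix_mult_def sum_UNIV_3 exchange3_entries jacobi3_entries)

lemma PST_if_return_amplitude_zero:
  assumes "0 < t" and u00: "evol (jacobi3 a0 a1 a0 b0 b0) t $ 0 $ 0 = 0"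
  shows "PST (jacobi3 a0 a1 a0 b0 b0) t"
proof -
  define U where "U = evol (jacobi3 a0 a1 a0 b0 b0) t"
  have orth: "cnj (U $ 0 $ i) * U $ 0 $ j + cnj (U $ 1 $ i) * U $ 1 $ j + cnj (U $ 2 $ i) * U $ 2 $ j
      = mat 1 $ i $ j" for i j
    using evol_columns_orthonormal[OF hermitian_jacobi3, of a0 a1 a0 b0 b0 t i j]
    by (simp add: U_def sum_UNIV_3)
  have "exchange3 ** U = U ** exchange3"
    unfolding U_def by (rule evol_commute) (rule exchange3_commute_jacobi3)
  then have entry: "(exchange3 ** U) $ r $ s = (U ** exchange3) $ r $ s" for r s
    by simp
  have "U $ 2 $ 0 = U $ 0 $ 2" and "U $ 2 $ 2 = U $ 0 $ 0" and "U $ 1 $ 0 = U $ 1 $ 2"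
    using entry[of 0 0] entry[of 0 2] entry[of 1 0]
    by (simp_all add: matrix_matrix_mult_def sum_UNIV_3 exchange3_entries)
  then have "cnj (U $ 1 $ 0) * U $ 1 $ 0 = 0"
    using orth[of 0 2] u00 by (simp add: U_def mat_def)
  then have u10: "U $ 1 $ 0 = 0" by simp
  then have "cnj (U $ 2 $ 0) * U $ 2 $ 0 = 1"
    using orth[of 0 0] u00 by (simp add: U_def mat_def)
  then have "norm (U $ 2 $ 0) = 1" by (rule norm_eq_1_if_cnj_mult_self)
  then show ?thesis
    using assms(1) u00 u10 by (simp add: PST_iff_first_column U_def)
qed

theorem mainTheorem1:
  fixes a0 a1 a2 b0 b1 T0 :: real
  assumes "b0 > 0" and "b1 > 0"
    and "PST (jacobi3 a0 a1 a2 b0 b1) T0"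
    and "\<forall>T. 0 < T \<and> T < T0 \<longrightarrow> \<not> PST (jacobi3 a0 a1 a2 b0 b1) T"
  shows "\<not> (\<exists>t. 0 < t \<and> t < T0 \<and>
           cinner (evol (jacobi3 a0 a1 a2 b0 b1) t *v e0) e0 = 0)"
proof
  assume "\<exists>t. 0 < t \<and> t < T0 \<and> cinner (evol (jacobi3 a0 a1 a2 b0 b1) t *v e0) e0 = 0"
  then obtain t where t: "0 < t" "t < T0"
    and return_zero: "evol (jacobi3 a0 a1 a2 b0 b1) t $ 0 $ 0 = 0"
    by (auto simp: cinner_e0 matrix_vector_mult_e0)
  have "a2 = a0" and "b1 = b0"
    using PST_jacobi3_symmetric[OF assms(1-3)] by auto
  then have "PST (jacobi3 a0 a1 a2 b0 b1) t"
    using PST_if_return_amplitude_zero[OF t(1)] return_zero by simp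
  with assms(4) t show False by blast
qed

end
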